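(* Let $L\ge 18$ be even. Then \[ M_S(L,3)\le\begin{cases} L/8 & \text{if } L\equiv 0\pmod 8,\\ (L-4)/8 & \text{if } L\equiv 4\pmod 8,\\ (L+2)/8 & \text{if } L\equiv 6\pmod{24},\\ (L-2)/8 & \text{if } L\equiv 2,10,18\pmod{24},\\ (L-6)/8 & \text{if } L\equiv 14,22\pmod{24}.\end{cases} \]
   Context: $\mathcal{P}(L,\omega)$ is the set of $\omega$-element subsets of $\mathbb{Z}_L$. For $\mathcal{I}\in\mathcal{P}(L,\omega)$: $d(\mathcal{I})=\{a-b \bmod L: a,b\in\mathcal{I}\}$, $d^*(\mathcal{I})=d(\mathcal{I})\setminus\{0\}$. A strongly conflict-avoiding code (SCAC) of length $L$ and weight $\omega$ is a set $\mathcal{C}=\{\mathcal{I}_1,\dots,\mathcal{I}_M\}\subseteq\mathcal{P}(L,\omega)$ such that for all $j\ne k$, $\big(d^*(\mathcal{I}_j)\cup(d^*(\mathcal{I}_j)+1)\cup(d^*(\mathcal{I}_j)-1)\big)\cap d(\mathcal{I}_k)=\emptyset$ (shifts mod $L$). $M_S(L,\omega)$ denotes the maximum number of codewords in an SCAC of length $L$ and weight $\omega$. *)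

theory Defs
  imports Main
begin

text \<open>Z_L is represented by {0..<L} (naturals) with arithmetic mod L.\<close>

definition Pset :: "nat \<Rightarrow> nat \<Rightarrow> nat set set" where
  "Pset L w = {I. I \<subseteq> {0..<L} \<and> card I = w}"

definition dset :: "nat \<Rightarrow> nat set \<Rightarrow> nat set" where
  "dset L I = {(a + L - b) mod L | a b. a \<in> I \<and> b \<in> I}"

definition dstar :: "nat \<Rightarrow> nat set \<Rightarrow> nat set" where
  "dstar L I = dset L I - {0}"

definition is_SCAC :: "nat \<Rightarrow> nat \<Rightarrow> nat set set \<Rightarrow> bool" where
  "is_SCAC L w C \<longleftrightarrow> C \<subseteq> Pset L w \<and>
     (\<forall>I\<in>C. \<forall>J\<in>C. I \<noteq> J \<longrightarrow>
        (dstar L I \<union> (\<lambda>x. (x + 1) mod L) ` dstar L I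
                   \<union> (\<lambda>x. (x + L - 1) mod L) ` dstar L I) \<inter> dset L J = {})"

definition M_S :: "nat \<Rightarrow> nat \<Rightarrow> nat" where
  "M_S L w = Max {card C | C. is_SCAC L w C}"

end

theory Submission
  imports Defs
begin

text \<open>
  A codeword \<open>{a < b < c}\<close> has cyclic gaps \<open>x, y, z\<close> with \<open>x + y + z = L\<close>, and its nonzero
  differences are \<open>D = {x, y, z, L - x, L - y, L - z}\<close>. The conflict-avoiding condition says that
  the sets \<open>D \<union> (D + 1)\<close> of distinct codewords are disjoint, and as soon as there are two codewords
  they lie in \<open>{2..<L}\<close>. A case analysis on the gaps shows that such a set has at least 8
  elements unless the codeword has one of three shapes (gaps \<open>L/3, L/3, L/3\<close>; gaps
  \<open>L/4, L/4, L/2\<close>; a difference \<open>u\<close> with \<open>3u = L \<plusminus> 1\<close>), which lose at most 4, 2 and 2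
  elements and each occur at most once because they share a fixed difference. Counting gives
  \<open>8 M \<le> L - 2 + deficit\<close>. When \<open>L \<equiv> 12 (mod 24)\<close> equality is impossible: it forces every
  other set to be a union of dominoes \<open>{s, s + 1}\<close> avoiding \<open>L/4 + 1\<close> and \<open>L/2\<close>, so the interval
  strictly between them, of odd length \<open>L/4 - 2\<close>, cannot be covered.
\<close>

definition gap_diffs :: "nat \<Rightarrow> nat \<Rightarrow> nat \<Rightarrow> nat set" where
  "gap_diffs x y z = {x, y, z, y + z, x + z, x + y}"

definition widen :: "nat set \<Rightarrow> nat set" where
  "widen D = D \<union> Suc ` D"

definition domino_tiled :: "nat set \<Rightarrow> bool" where
  "domino_tiled E \<longleftrightarrow> (\<exists>S. finite S \<and> S \<inter> Suc ` S = {} \<and> E = widen S)"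

definition thirds_shape :: "nat \<Rightarrow> nat set \<Rightarrow> bool" where
  "thirds_shape L D \<longleftrightarrow> (\<exists>u. 3 * u = L \<and> D = {u, 2 * u})"

definition quarters_shape :: "nat \<Rightarrow> nat set \<Rightarrow> bool" where
  "quarters_shape L D \<longleftrightarrow> (\<exists>u. 4 * u = L \<and> D = {u, 2 * u, 3 * u})"

definition near_thirds_shape :: "nat \<Rightarrow> nat set \<Rightarrow> bool" where
  "near_thirds_shape L D \<longleftrightarrow> (\<exists>u\<in>D. 3 * u = L + 1 \<or> 3 * u + 1 = L)"

definition deficit :: "nat \<Rightarrow> nat set \<Rightarrow> nat" where
  "deficit L D =
     (if thirds_shape L D then 4 else if quarters_shape L D \<or> near_thirds_shape L D then 2 else 0)"

lemma finite_widen: "finite D \<Longrightarrow> finite (widen D)"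
  by (simp add: widen_def)

lemma subset_widen: "D \<subseteq> widen D"
  by (simp add: widen_def)

lemma finite_gap_diffs [simp]: "finite (gap_diffs x y z)"
  by (simp add: gap_diffs_def)

lemma length_le_card_if_sorted:
  fixes xs :: "'a::linorder list"
  assumes "sorted_wrt (<) xs" "set xs \<subseteq> A" "finite A"
  shows "length xs \<le> card A"
proof -
  have "distinct xs" using assms(1) by (simp only: strict_sorted_iff)
  then show ?thesis using card_mono[OF assms(3,2)] by (simp add: distinct_card)
qed

lemma set_eq_if_sorted_card_eq:
  fixes xs :: "'a::linorder list"
  assumes "sorted_wrt (<) xs" "set xs \<subseteq> A" "finite A" "card A = length xs"
  shows "A = set xs"
proof -
  have "distinct xs" using assms(1) by (simp only: strict_sorted_iff)
  then show ?thesis using assms(2-4) by (metis card_subset_eq distinct_card)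
qed

lemma card_le_length_if_subset: "A \<subseteq> set xs \<Longrightarrow> card A \<le> length xs"
  by (metis card_length card_mono List.finite_set order_trans)

lemma domino_tiled_sorted:
  assumes "sorted_wrt (<) [a, Suc a, b, Suc b, c, Suc c, d, Suc d]"
  shows "domino_tiled (set [a, Suc a, b, Suc b, c, Suc c, d, Suc d])"
  unfolding domino_tiled_def widen_def using assms by (intro exI[of _ "{a, b, c, d}"]) auto

lemma even_card_domino_tiled_Int:
  assumes "domino_tiled E" "p \<notin> E" "q \<notin> E"
  shows "even (card (E \<inter> {Suc p..<q}))"
proof -
  obtain S where S: "finite S" "S \<inter> Suc ` S = {}" "E = widen S"
    using assms(1) by (auto simp: domino_tiled_def)
  let ?T = "S \<inter> {Suc p..<q}"
  have "s \<noteq> p \<and> Suc s \<noteq> q" if "s \<in> S" for s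
    using that assms(2,3) S(3) by (auto simp: widen_def)
  then have "E \<inter> {Suc p..<q} = ?T \<union> Suc ` ?T"
    unfolding S(3) widen_def by fastforce
  moreover have "?T \<inter> Suc ` ?T = {}" using S(2) by blast
  ultimately have "card (E \<inter> {Suc p..<q}) = card ?T + card (Suc ` ?T)"
    using S(1) by (simp add: card_Un_disjoint)
  also have "\<dots> = 2 * card ?T" by (simp add: card_image)
  finally show ?thesis by simp
qed

lemma le3_cases:
  fixes x y z :: nat
  assumes "x \<le> y" "y \<le> z"
  obtains "x < y" "y < z" "z < x + y" | "x < y" "z = x + y" | "x < y" "x + y < z"
    | "x < y" "y = z" | "x = y" "y < z" "z < x + y" | "x = y" "z = x + y" | "x = y" "x + y < z"
    | "x = y" "y = z"
  using assms by (metis le_neq_implies_less linorder_neqE_nat)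

lemma obtain_sorted_gaps:
  fixes x y z :: nat
  obtains a b c where "a \<le> b" "b \<le> c" "a \<in> {x, y, z}" "a + b + c = x + y + z"
    "gap_diffs a b c = gap_diffs x y z"
proof -
  have sym: "gap_diffs x y z = gap_diffs y x z" "gap_diffs x y z = gap_diffs x z y"
    "gap_diffs x y z = gap_diffs z y x" "gap_diffs x y z = gap_diffs y z x"
    "gap_diffs x y z = gap_diffs z x y"
    by (auto simp: gap_diffs_def add.commute)
  consider "x \<le> y" "y \<le> z" | "x \<le> z" "z \<le> y" | "y \<le> x" "x \<le> z" | "y \<le> z" "z \<le> x"
    | "z \<le> x" "x \<le> y" | "z \<le> y" "y \<le> x" by linarith
  then show ?thesis
  proof cases
    case 1 then show ?thesis by (intro that[of x y z]) simp_all
  next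
    case 2 then show ?thesis using sym(2) by (intro that[of x z y]) simp_all
  next
    case 3 then show ?thesis using sym(1) by (intro that[of y x z]) simp_all
  next
    case 4 then show ?thesis using sym(4) by (intro that[of y z x]) simp_all
  next
    case 5 then show ?thesis using sym(5) by (intro that[of z x y]) simp_all
  next
    case 6 then show ?thesis using sym(3) by (intro that[of z y x]) simp_all
  qed
qed

lemma card_widen_gap_diffs_sorted:
  fixes x y z :: nat
  defines "D \<equiv> gap_diffs x y z"
  assumes "2 \<le> x" "x \<le> y" "y \<le> z" "even (x + y + z)"
  shows "8 \<le> card (widen D)
    \<or> 6 \<le> card (widen D) \<and> (quarters_shape (x + y + z) D \<or> near_thirds_shape (x + y + z) D)
    \<or> 4 \<le> card (widen D) \<and> thirds_shape (x + y + z) D"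
proof -
  have card_ge: "length xs \<le> card (widen D)" if "sorted_wrt (<) xs" "set xs \<subseteq> widen D" for xs
    using length_le_card_if_sorted[OF that] by (simp add: D_def finite_widen)
  note defs = D_def gap_diffs_def widen_def
  from le3_cases[OF assms(3,4)] show ?thesis
  proof cases
    case 1
    have "Suc z < x + y" using 1(3) assms(5) by presburger
    then have "length [x, y, z, Suc z, x + y, x + z, y + z, Suc (y + z)] \<le> card (widen D)"
      by (intro card_ge) (use 1 assms(2-4) in \<open>simp_all add: defs\<close>)
    then show ?thesis by simp
  next
    case 2
    have "length [x, y, Suc y, z, Suc z, x + z, y + z, Suc (y + z)] \<le> card (widen D)"
      by (intro card_ge) (use 2 assms(2-4) in \<open>simp_all add: defs\<close>)
    then show ?thesis by simp
  next
    case 3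
    have "Suc (x + y) < z" using 3(2) assms(5) by presburger
    then have "length [x, y, x + y, Suc (x + y), z, x + z, y + z, Suc (y + z)] \<le> card (widen D)"
      by (intro card_ge) (use 3 assms(2-4) in \<open>simp_all add: defs\<close>)
    then show ?thesis by simp
  next
    case 4
    show ?thesis
    proof (cases "y = Suc x")
      case False
      have "length [x, Suc x, y, Suc y, x + y, Suc (x + y), y + z, Suc (y + z)] \<le> card (widen D)"
        by (intro card_ge) (use 4 False assms(2-4) in \<open>simp_all add: defs\<close>)
      then show ?thesis by simp
    next
      case True
      have "length [x, y, Suc y, x + y, Suc (x + y), Suc (y + z)] \<le> card (widen D)"
        by (intro card_ge) (use 4 True assms(2-4) in \<open>simp_all add: defs\<close>)
      moreover have "near_thirds_shape (x + y + z) D"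
        unfolding near_thirds_shape_def D_def gap_diffs_def using 4 True by auto
      ultimately show ?thesis by simp
    qed
  next
    case 5
    show ?thesis
    proof (cases "z = Suc x")
      case False
      have "Suc z < x + y" using 5(3) assms(5) by presburger
      then have "length [x, Suc x, z, Suc z, x + y, Suc (x + y), y + z, Suc (y + z)] \<le> card (widen D)"
        by (intro card_ge) (use 5 False assms(2-4) in \<open>simp_all add: defs\<close>)
      then show ?thesis by simp
    next
      case True
      have "3 \<le> x" using 5(1) True assms(2,5) by (cases "x = 2") auto
      then have "length [x, Suc x, Suc z, x + y, Suc (x + y), Suc (y + z)] \<le> card (widen D)"
        by (intro card_ge) (use True 5(1)[symmetric] in \<open>simp_all add: defs\<close>)
      moreover have "near_thirds_shape (x + y + z) D"
        unfolding near_thirds_shape_def D_def gap_diffs_def using 5 True by auto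
      ultimately show ?thesis by simp
    qed
  next
    case 6
    have "length [x, Suc x, 2 * x, Suc (2 * x), 3 * x, Suc (3 * x)] \<le> card (widen D)"
      by (intro card_ge) (use 6 assms(2-4) in \<open>simp_all add: defs\<close>)
    moreover have "quarters_shape (x + y + z) D"
      unfolding quarters_shape_def D_def gap_diffs_def using 6
      by (intro exI[of _ x]) (auto simp: insert_commute)
    ultimately show ?thesis by simp
  next
    case 7
    have "Suc (x + y) < z" using 7(2) assms(5) by presburger
    then have "length [x, Suc x, x + y, Suc (x + y), z, Suc z, y + z, Suc (y + z)] \<le> card (widen D)"
      by (intro card_ge) (use 7 assms(2-4) in \<open>simp_all add: defs\<close>)
    then show ?thesis by simp
  next
    case 8
    have "length [x, Suc x, 2 * x, Suc (2 * x)] \<le> card (widen D)"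
      by (intro card_ge) (use 8 assms(2-4) in \<open>simp_all add: defs\<close>)
    moreover have "thirds_shape (x + y + z) D"
      unfolding thirds_shape_def D_def gap_diffs_def using 8
      by (intro exI[of _ x]) (auto simp: insert_commute)
    ultimately show ?thesis by simp
  qed
qed

lemma domino_tiled_widen_gap_diffs_sorted:
  fixes x y z :: nat
  defines "D \<equiv> gap_diffs x y z"
  assumes "2 \<le> x" "x \<le> y" "y \<le> z" "even (x + y + z)"
    and card8: "card (widen D) = 8" and half: "(x + y + z) div 2 \<notin> D"
  shows "domino_tiled (widen D)"
proof -
  have widen_eq: "widen D = set xs" if "sorted_wrt (<) xs" "set xs \<subseteq> widen D" "length xs = 8" for xs
    using set_eq_if_sorted_card_eq[OF that(1,2)] card8 that(3) by (simp add: D_def finite_widen)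
  have card_le: "card (widen D) \<le> length xs" if "widen D \<subseteq> set xs" for xs
    using card_le_length_if_subset[OF that] .
  have succ: "Suc u \<in> widen D" if "u \<in> D" for u
    using that by (simp add: widen_def)
  note defs = D_def gap_diffs_def widen_def
  from le3_cases[OF assms(3,4)] show ?thesis
  proof cases
    case 1
    have "Suc z < x + y" using 1(3) assms(5) by presburger
    then have E: "widen D = set [x, y, z, Suc z, x + y, x + z, y + z, Suc (y + z)]"
      by (intro widen_eq) (use 1 assms(2-4) in \<open>simp_all add: defs\<close>)
    have "Suc x \<in> widen D" by (rule succ) (simp add: D_def gap_diffs_def)
    then have y: "y = Suc x" using 1 \<open>Suc z < x + y\<close> unfolding E by auto
    have "Suc y \<in> widen D" by (rule succ) (simp add: D_def gap_diffs_def)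
    then have z: "z = Suc y" using 1 \<open>Suc z < x + y\<close> unfolding E by auto
    show ?thesis
      using domino_tiled_sorted[of x z "x + y" "y + z"] 1 \<open>Suc z < x + y\<close> y z E by simp
  next
    case 2
    then have "z = (x + y + z) div 2" by simp
    then show ?thesis using half by (simp add: D_def gap_diffs_def)
  next
    case 3
    have "Suc (x + y) < z" using 3(2) assms(5) by presburger
    then have E: "widen D = set [x, y, x + y, Suc (x + y), z, x + z, y + z, Suc (y + z)]"
      by (intro widen_eq) (use 3 assms(2-4) in \<open>simp_all add: defs\<close>)
    have "Suc y \<in> widen D" by (rule succ) (simp add: D_def gap_diffs_def)
    then have False using 3 \<open>Suc (x + y) < z\<close> assms(2) unfolding E by auto
    then show ?thesis ..
  next
    case 4
    show ?thesis
    proof (cases "y = Suc x")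
      case False
      have E: "widen D = set [x, Suc x, y, Suc y, x + y, Suc (x + y), y + z, Suc (y + z)]"
        by (intro widen_eq) (use 4 False assms(2-4) in \<open>simp_all add: defs\<close>)
      show ?thesis using domino_tiled_sorted[of x y "x + y" "y + z"] 4 False assms(2-4) E by simp
    next
      case True
      have "card (widen D) \<le> length [x, y, Suc y, x + y, Suc (x + y), Suc (y + z)]"
        by (intro card_le) (use 4 True in \<open>auto simp: defs\<close>)
      then show ?thesis using card8 by simp
    qed
  next
    case 5
    show ?thesis
    proof (cases "z = Suc x")
      case False
      have "Suc z < x + y" using 5(3) assms(5) by presburger
      have E: "widen D = set [x, Suc x, z, Suc z, x + y, Suc (x + y), y + z, Suc (y + z)]"
        by (intro widen_eq) (use 5 False \<open>Suc z < x + y\<close> assms(2-4) in \<open>simp_all add: defs\<close>)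
      show ?thesis
        using domino_tiled_sorted[of x z "x + y" "y + z"] 5 False \<open>Suc z < x + y\<close> assms(2-4) E by simp
    next
      case True
      have "card (widen D) \<le> length [x, Suc x, Suc z, x + y, Suc (x + y), Suc (y + z)]"
        by (intro card_le) (use 5 True in \<open>auto simp: defs\<close>)
      then show ?thesis using card8 by simp
    qed
  next
    case 6
    have "card (widen D) \<le> length [x, Suc x, 2 * x, Suc (2 * x), 3 * x, Suc (3 * x)]"
      by (intro card_le) (use 6 in \<open>auto simp: defs\<close>)
    then show ?thesis using card8 by simp
  next
    case 7
    have "Suc (x + y) < z" using 7(2) assms(5) by presburger
    have E: "widen D = set [x, Suc x, x + y, Suc (x + y), z, Suc z, y + z, Suc (y + z)]"
      by (intro widen_eq) (use 7 \<open>Suc (x + y) < z\<close> assms(2-4) in \<open>simp_all add: defs\<close>)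
    show ?thesis
      using domino_tiled_sorted[of x "x + y" z "y + z"] 7 \<open>Suc (x + y) < z\<close> assms(2-4) E by simp
  next
    case 8
    have "card (widen D) \<le> length [x, Suc x, 2 * x, Suc (2 * x)]"
      by (intro card_le) (use 8 in \<open>auto simp: defs\<close>)
    then show ?thesis using card8 by simp
  qed
qed

lemma eight_le_card_widen_gap_diffs:
  fixes x y z :: nat
  assumes "2 \<le> x" "2 \<le> y" "2 \<le> z" "even (x + y + z)"
  shows "8 \<le> card (widen (gap_diffs x y z)) + deficit (x + y + z) (gap_diffs x y z)"
proof -
  obtain a b c where abc: "a \<le> b" "b \<le> c" "a \<in> {x, y, z}" "a + b + c = x + y + z"
    "gap_diffs a b c = gap_diffs x y z"
    using obtain_sorted_gaps .
  have "2 \<le> a" using abc(3) assms(1-3) by auto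
  from card_widen_gap_diffs_sorted[OF this abc(1,2)] show ?thesis
    using abc(4,5) assms(4) by (auto simp: deficit_def)
qed

lemma domino_tiled_widen_gap_diffs:
  fixes x y z :: nat
  assumes "2 \<le> x" "2 \<le> y" "2 \<le> z" "even (x + y + z)"
    and "card (widen (gap_diffs x y z)) = 8" and "(x + y + z) div 2 \<notin> gap_diffs x y z"
  shows "domino_tiled (widen (gap_diffs x y z))"
proof -
  obtain a b c where abc: "a \<le> b" "b \<le> c" "a \<in> {x, y, z}" "a + b + c = x + y + z"
    "gap_diffs a b c = gap_diffs x y z"
    using obtain_sorted_gaps .
  have "2 \<le> a" using abc(3) assms(1-3) by auto
  from domino_tiled_widen_gap_diffs_sorted[OF this abc(1,2)] show ?thesis
    using abc(4,5) assms(4-6) by simp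
qed

lemma finite_Pset: "finite (Pset L w)"
  by (rule finite_subset[of _ "Pow {0..<L}"]) (auto simp: Pset_def)

lemma obtain_M_S_witness:
  obtains C where "is_SCAC L w C" "M_S L w = card C"
proof -
  let ?S = "{card C | C. is_SCAC L w C}"
  have "?S \<subseteq> {..card (Pset L w)}"
    by (auto simp: is_SCAC_def intro!: card_mono[OF finite_Pset])
  moreover have "is_SCAC L w {}" by (simp add: is_SCAC_def)
  ultimately have "M_S L w \<in> ?S"
    unfolding M_S_def by (intro Max_in) (auto dest: finite_subset)
  with that show ?thesis by blast
qed

lemma zero_in_dset: "I \<noteq> {} \<Longrightarrow> 0 \<in> dset L I"
  unfolding dset_def by force

lemma dset_eq_image: "dset L I = (\<lambda>(u, v). (u + L - v) mod L) ` (I \<times> I)"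
  unfolding dset_def by auto

lemma dset_three_points:
  assumes "a < b" "b < c" "c < L"
  shows "dset L {a, b, c} = insert 0 (gap_diffs (b - a) (c - b) (L - (c - a)))"
proof -
  have up: "(u + L - v) mod L = u - v" if "v \<le> u" "u < L" for u v
  proof -
    have "u + L - v = (u - v) + L" using that by simp
    then show ?thesis using that by (simp only: mod_add_self2) simp
  qed
  have down: "(u + L - v) mod L = u + L - v" if "u < v" "v < L" for u v
    using that by simp
  have "dset L {a, b, c} = (\<lambda>(u, v). (u + L - v) mod L) ` ({a, b, c} \<times> {a, b, c})"
    by (rule dset_eq_image)
  also have "\<dots> = {0, b - a, c - a, c - b, a + L - b, a + L - c, b + L - c}"
    using assms by (simp add: up down insert_commute)
  also have "\<dots> = insert 0 (gap_diffs (b - a) (c - b) (L - (c - a)))"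
  proof -
    have z: "L - (c - a) = a + L - c" using assms by auto
    have sums: "c - b + (a + L - c) = a + L - b" "b - a + (a + L - c) = b + L - c"
      "b - a + (c - b) = c - a"
      using assms by auto
    show ?thesis unfolding gap_diffs_def z sums by (simp add: insert_commute)
  qed
  finally show ?thesis .
qed

lemma obtain_gaps_Pset3:
  assumes "I \<in> Pset L 3"
  obtains x y z where "0 < x" "0 < y" "0 < z" "x + y + z = L"
    "dset L I = insert 0 (gap_diffs x y z)"
proof -
  have I: "I \<subseteq> {0..<L}" "card I = 3" using assms by (auto simp: Pset_def)
  then have "finite I" by (simp add: card_ge_0_finite)
  define xs where "xs = sorted_list_of_set I"
  have "length xs = 3" using I(2) by (simp add: xs_def)
  then obtain a b c where abc: "xs = [a, b, c]"
    by (auto simp: numeral_3_eq_3 length_Suc_conv)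
  have "sorted_wrt (<) [a, b, c]" by (metis abc xs_def strict_sorted_list_of_set)
  then have "a < b" "b < c" by auto
  moreover have "I = {a, b, c}"
    using abc \<open>finite I\<close> by (metis xs_def list.set set_sorted_list_of_set)
  moreover have "c < L" using I(1) calculation by auto
  ultimately show ?thesis
    by (intro that[of "b - a" "c - b" "L - (c - a)"]) (auto simp: dset_three_points)
qed

lemma card_le_1_if_disjoint_witness:
  assumes "finite C"
    and "\<And>I J. I \<in> C \<Longrightarrow> J \<in> C \<Longrightarrow> I \<noteq> J \<Longrightarrow> D I \<inter> D J = {}"
    and "\<And>I. I \<in> C \<Longrightarrow> P I \<Longrightarrow> \<exists>u\<in>D I. Q u"
    and "\<And>u v. Q u \<Longrightarrow> Q v \<Longrightarrow> u = v"
  shows "card {I \<in> C. P I} \<le> 1"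
proof -
  have "I = J" if "I \<in> C" "P I" "J \<in> C" "P J" for I J
    using assms(2-4) that by (metis disjoint_iff)
  then show ?thesis using assms(1) by (auto simp: card_le_Suc0_iff_eq)
qed

locale scac3 =
  fixes L :: nat and C :: "nat set set"
  assumes scac: "is_SCAC L 3 C" and two_codewords: "2 \<le> card C"
begin

lemma finite_codewords: "finite C"
  using two_codewords card.infinite by fastforce

lemma codeword_in_Pset: "I \<in> C \<Longrightarrow> I \<in> Pset L 3"
  using scac by (auto simp: is_SCAC_def)

lemma conflict_free:
  assumes "I \<in> C" "J \<in> C" "I \<noteq> J" "u \<in> dstar L I"
  shows "u \<notin> dset L J" "(u + 1) mod L \<notin> dset L J" "(u + L - 1) mod L \<notin> dset L J"
proof -
  have "(dstar L I \<union> (\<lambda>x. (x + 1) mod L) ` dstar L I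
          \<union> (\<lambda>x. (x + L - 1) mod L) ` dstar L I) \<inter> dset L J = {}"
    using scac assms(1-3) unfolding is_SCAC_def by blast
  then show "u \<notin> dset L J" "(u + 1) mod L \<notin> dset L J" "(u + L - 1) mod L \<notin> dset L J"
    using assms(4) by auto
qed

lemma obtain_gaps:
  assumes "I \<in> C"
  obtains x y z where "2 \<le> x" "2 \<le> y" "2 \<le> z" "x + y + z = L" "dstar L I = gap_diffs x y z"
proof -
  obtain x y z where xyz: "0 < x" "0 < y" "0 < z" "x + y + z = L"
    "dset L I = insert 0 (gap_diffs x y z)"
    using obtain_gaps_Pset3[OF codeword_in_Pset[OF assms]] .
  have "0 \<notin> gap_diffs x y z" using xyz(1-3) by (auto simp: gap_diffs_def)
  then have D: "dstar L I = gap_diffs x y z" using xyz(5) by (auto simp: dstar_def)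
  obtain J where J: "J \<in> C" "J \<noteq> I"
    using two_codewords assms by (metis card_le_Suc0_iff_eq finite_codewords not_less_eq_eq numeral_2_eq_2)
  have "0 \<in> dset L J"
    using codeword_in_Pset[OF J(1)] by (intro zero_in_dset) (auto simp: Pset_def)
  have "1 \<notin> dstar L I"
  proof
    assume "1 \<in> dstar L I"
    from conflict_free(3)[OF assms J(1) J(2)[symmetric] this] \<open>0 \<in> dset L J\<close>
    show False by simp
  qed
  then have "x \<noteq> 1" "y \<noteq> 1" "z \<noteq> 1" using D by (auto simp: gap_diffs_def)
  with xyz D show ?thesis by (intro that) auto
qed

lemma dstar_bounds: "I \<in> C \<Longrightarrow> u \<in> dstar L I \<Longrightarrow> 2 \<le> u \<and> u + 2 \<le> L"
  by (erule obtain_gaps) (auto simp: gap_diffs_def)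

lemma widen_dstar_subset: "I \<in> C \<Longrightarrow> widen (dstar L I) \<subseteq> {2..<L}"
  using dstar_bounds by (force simp: widen_def)

lemma widen_dstar_disjoint:
  assumes "I \<in> C" "J \<in> C" "I \<noteq> J"
  shows "widen (dstar L I) \<inter> widen (dstar L J) = {}"
proof -
  have sub: "dstar L K \<subseteq> dset L K" for K by (auto simp: dstar_def)
  have "u \<notin> dstar L J" "Suc u \<notin> dstar L J" if "u \<in> dstar L I" for u
  proof -
    have "(u + 1) mod L = Suc u" using dstar_bounds[OF assms(1) that] by simp
    then show "u \<notin> dstar L J" "Suc u \<notin> dstar L J"
      using conflict_free(1,2)[OF assms that] sub by auto
  qed
  moreover have "Suc u \<notin> dstar L I" if "u \<in> dstar L J" for u
  proof
    assume "Suc u \<in> dstar L I"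
    from conflict_free(3)[OF assms this] have "(Suc u + L - 1) mod L \<notin> dset L J" .
    moreover have "(Suc u + L - 1) mod L = u" using dstar_bounds[OF assms(2) that] by simp
    ultimately show False using sub that by auto
  qed
  ultimately show ?thesis unfolding widen_def by blast
qed

lemma dstar_disjoint: "I \<in> C \<Longrightarrow> J \<in> C \<Longrightarrow> I \<noteq> J \<Longrightarrow> dstar L I \<inter> dstar L J = {}"
  using widen_dstar_disjoint subset_widen by blast

lemma card_UNION_widen_dstar:
  "card (\<Union>I\<in>C. widen (dstar L I)) = (\<Sum>I\<in>C. card (widen (dstar L I)))"
proof -
  have "finite (widen (dstar L I))" if "I \<in> C" for I
    using that by (rule obtain_gaps) (simp add: finite_widen)
  then show ?thesis
    using widen_dstar_disjoint by (intro card_UN_disjoint[OF finite_codewords]) auto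
qed

lemma sum_card_widen_dstar_le: "(\<Sum>I\<in>C. card (widen (dstar L I))) \<le> L - 2"
  using card_mono[of "{2..<L}" "\<Union>I\<in>C. widen (dstar L I)"] widen_dstar_subset
  by (auto simp: card_UNION_widen_dstar)

lemma eight_le_card_widen_dstar:
  assumes "even L" "I \<in> C"
  shows "8 \<le> card (widen (dstar L I)) + deficit L (dstar L I)"
  using assms(2) by (rule obtain_gaps) (use assms(1) eight_le_card_widen_gap_diffs in auto)

lemma eight_mult_card_le_sum:
  assumes "even L"
  shows "8 * card C \<le> (\<Sum>I\<in>C. card (widen (dstar L I)) + deficit L (dstar L I))"
  using sum_mono[of C "\<lambda>_. 8" "\<lambda>I. card (widen (dstar L I)) + deficit L (dstar L I)"]
    eight_le_card_widen_dstar[OF assms] by simp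

lemma eight_mult_card_le:
  assumes "even L"
  shows "8 * card C \<le> (L - 2) + (\<Sum>I\<in>C. deficit L (dstar L I))"
  using eight_mult_card_le_sum[OF assms] sum_card_widen_dstar_le by (simp add: sum.distrib)

lemma card_thirds_le: "card {I \<in> C. thirds_shape L (dstar L I)} \<le> of_bool (3 dvd L)"
proof (cases "\<exists>I\<in>C. thirds_shape L (dstar L I)")
  case True
  then have "3 dvd L" by (auto simp: thirds_shape_def)
  moreover have "card {I \<in> C. thirds_shape L (dstar L I)} \<le> 1"
    by (rule card_le_1_if_disjoint_witness[OF finite_codewords dstar_disjoint,
          where Q = "\<lambda>u. 3 * u = L"]) (auto simp: thirds_shape_def)
  ultimately show ?thesis by simp
next
  case False
  then have "{I \<in> C. thirds_shape L (dstar L I)} = {}" by blast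
  then show ?thesis by (metis card.empty zero_le)
qed

lemma card_quarters_le: "card {I \<in> C. quarters_shape L (dstar L I)} \<le> of_bool (4 dvd L)"
proof (cases "\<exists>I\<in>C. quarters_shape L (dstar L I)")
  case True
  then have "4 dvd L" by (auto simp: quarters_shape_def)
  moreover have "card {I \<in> C. quarters_shape L (dstar L I)} \<le> 1"
    by (rule card_le_1_if_disjoint_witness[OF finite_codewords dstar_disjoint,
          where Q = "\<lambda>u. 4 * u = L"]) (auto simp: quarters_shape_def)
  ultimately show ?thesis by simp
next
  case False
  then have "{I \<in> C. quarters_shape L (dstar L I)} = {}" by blast
  then show ?thesis by (metis card.empty zero_le)
qed

lemma card_near_thirds_le:
  "card {I \<in> C. near_thirds_shape L (dstar L I)} \<le> of_bool (\<not> 3 dvd L)"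
proof (cases "\<exists>I\<in>C. near_thirds_shape L (dstar L I)")
  case True
  then have "\<not> 3 dvd L" by (auto simp: near_thirds_shape_def) presburger+
  moreover have "card {I \<in> C. near_thirds_shape L (dstar L I)} \<le> 1"
    by (rule card_le_1_if_disjoint_witness[OF finite_codewords dstar_disjoint,
          where Q = "\<lambda>u. 3 * u = L + 1 \<or> 3 * u + 1 = L"]) (auto simp: near_thirds_shape_def)
  ultimately show ?thesis by simp
next
  case False
  then have "{I \<in> C. near_thirds_shape L (dstar L I)} = {}" by blast
  then show ?thesis by (metis card.empty zero_le)
qed

lemma sum_deficit_le_shape_counts:
  "(\<Sum>I\<in>C. deficit L (dstar L I))
     \<le> 4 * card {I \<in> C. thirds_shape L (dstar L I)} + 2 * card {I \<in> C. quarters_shape L (dstar L I)}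
       + 2 * card {I \<in> C. near_thirds_shape L (dstar L I)}"
proof -
  have "(\<Sum>I\<in>C. deficit L (dstar L I))
      \<le> (\<Sum>I\<in>C. 4 * of_bool (thirds_shape L (dstar L I)) + 2 * of_bool (quarters_shape L (dstar L I))
                 + 2 * of_bool (near_thirds_shape L (dstar L I)))"
    by (rule sum_mono) (simp add: deficit_def)
  also have "\<dots> = 4 * card {I \<in> C. thirds_shape L (dstar L I)} + 2 * card {I \<in> C. quarters_shape L (dstar L I)}
       + 2 * card {I \<in> C. near_thirds_shape L (dstar L I)}"
    using finite_codewords by (simp add: sum.distrib Int_def flip: sum_distrib_left)
  finally show ?thesis .
qed

lemma sum_deficit_le:
  "(\<Sum>I\<in>C. deficit L (dstar L I)) \<le> (if 3 dvd L then 4 else 2) + (if 4 dvd L then 2 else 0)"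
  using sum_deficit_le_shape_counts card_thirds_le card_quarters_le card_near_thirds_le
  by (cases "3 dvd L"; cases "4 dvd L") auto

lemma tight_count:
  assumes "even L" and tight: "(L - 2) + (\<Sum>I\<in>C. deficit L (dstar L I)) \<le> 8 * card C"
  shows "(\<Union>I\<in>C. widen (dstar L I)) = {2..<L}"
    and "I \<in> C \<Longrightarrow> card (widen (dstar L I)) + deficit L (dstar L I) = 8"
proof -
  have sums: "(\<Sum>I\<in>C. card (widen (dstar L I))) = L - 2"
    "(\<Sum>I\<in>C. card (widen (dstar L I)) + deficit L (dstar L I)) = (\<Sum>I\<in>C. 8)"
    using eight_mult_card_le_sum[OF assms(1)] tight sum_card_widen_dstar_le
    by (simp_all add: sum.distrib)
  show "(\<Union>I\<in>C. widen (dstar L I)) = {2..<L}"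
    using widen_dstar_subset sums(1) by (intro card_subset_eq) (auto simp: card_UNION_widen_dstar)
  show "card (widen (dstar L I)) + deficit L (dstar L I) = 8" if "I \<in> C"
    using sum_mono_inv[OF sums(2)[symmetric] eight_le_card_widen_dstar[OF assms(1)] that finite_codewords]
    by simp
qed

lemma even_card_widen_dstar_Int_middle:
  assumes L: "L = 4 * h" "3 dvd h" "6 \<le> h"
    and J: "J \<in> C" "quarters_shape L (dstar L J)"
    and I: "I \<in> C" "card (widen (dstar L I)) + deficit L (dstar L I) = 8"
  shows "even (card (widen (dstar L I) \<inter> {Suc (Suc h)..<2 * h}))"
proof -
  let ?Q = "{Suc (Suc h)..<2 * h}"
  have J_eq: "dstar L J = {h, 2 * h, 3 * h}" using J(2) L(1) by (auto simp: quarters_shape_def)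
  consider (quarters) "quarters_shape L (dstar L I)" | (thirds) "thirds_shape L (dstar L I)"
    | (generic) "\<not> quarters_shape L (dstar L I)" "\<not> thirds_shape L (dstar L I)"
    by blast
  then show ?thesis
  proof cases
    case quarters
    then have "dstar L I = {h, 2 * h, 3 * h}" using L(1) by (auto simp: quarters_shape_def)
    then have "widen (dstar L I) \<inter> ?Q = {}" by (auto simp: widen_def)
    then show ?thesis by simp
  next
    case thirds
    then obtain u where u: "3 * u = L" "dstar L I = {u, 2 * u}" by (auto simp: thirds_shape_def)
    then have "widen (dstar L I) \<inter> ?Q = {u, Suc u}" using L(1,3) by (auto simp: widen_def)
    then show ?thesis by simp
  next
    case generic
    have "\<not> near_thirds_shape L (dstar L I)"
      using L(1,2) by (auto simp: near_thirds_shape_def) presburger+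
    then have card8: "card (widen (dstar L I)) = 8" using I(2) generic by (simp add: deficit_def)
    have "I \<noteq> J" using generic J(2) by blast
    then have "widen (dstar L I) \<inter> widen (dstar L J) = {}"
      by (rule widen_dstar_disjoint[OF I(1) J(1)])
    then have out: "Suc h \<notin> widen (dstar L I)" "2 * h \<notin> widen (dstar L I)"
      using J_eq by (auto simp: widen_def)
    obtain x y z where xyz: "2 \<le> x" "2 \<le> y" "2 \<le> z" "x + y + z = L" "dstar L I = gap_diffs x y z"
      using I(1) by (rule obtain_gaps)
    have "(x + y + z) div 2 \<notin> gap_diffs x y z"
      using out(2) xyz(4,5) L(1) subset_widen by fastforce
    then have "domino_tiled (widen (dstar L I))"
      using domino_tiled_widen_gap_diffs[OF xyz(1-3)] xyz(4,5) card8 L(1) by simp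
    then show ?thesis using even_card_domino_tiled_Int out by blast
  qed
qed

lemma eight_mult_card_less:
  assumes "L mod 24 = 12" "18 \<le> L"
  shows "8 * card C < L + 4"
proof (rule ccontr)
  assume "\<not> 8 * card C < L + 4"
  define h where "h = L div 4"
  have L: "L = 4 * h" "even L" "3 dvd L" "4 dvd L" "3 dvd h"
    using assms(1) unfolding h_def by presburger+
  have h: "odd h" "9 \<le> h" using assms unfolding h_def by presburger+
  let ?count = "\<lambda>P. card {I \<in> C. P L (dstar L I)}"
  let ?deficit = "\<Sum>I\<in>C. deficit L (dstar L I)"
  have "?count near_thirds_shape = 0" using card_near_thirds_le L(3) by simp
  moreover have "?count thirds_shape \<le> 1" using card_thirds_le by (cases "3 dvd L") auto
  moreover have "6 \<le> ?deficit"
    using eight_mult_card_le[OF L(2)] \<open>\<not> 8 * card C < L + 4\<close> assms(2) by linarith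
  ultimately have "?count quarters_shape \<noteq> 0" using sum_deficit_le_shape_counts by linarith
  then have "{I \<in> C. quarters_shape L (dstar L I)} \<noteq> {}" by (metis card.empty)
  then obtain J where J: "J \<in> C" "quarters_shape L (dstar L J)" by blast
  have "?deficit \<le> 6" using sum_deficit_le L(3,4) by simp
  then have tight: "(L - 2) + ?deficit \<le> 8 * card C"
    using \<open>\<not> 8 * card C < L + 4\<close> assms(2) by linarith
  let ?Q = "{Suc (Suc h)..<2 * h}"
  have "?Q \<subseteq> {2..<L}" using L(1) by auto
  then have "?Q = (\<Union>I\<in>C. widen (dstar L I) \<inter> ?Q)"
    using tight_count(1)[OF L(2) tight] by blast
  also have "card \<dots> = (\<Sum>I\<in>C. card (widen (dstar L I) \<inter> ?Q))"
    using widen_dstar_disjoint by (intro card_UN_disjoint[OF finite_codewords]) auto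
  finally have "card ?Q = (\<Sum>I\<in>C. card (widen (dstar L I) \<inter> ?Q))" .
  also have "even \<dots>"
    using even_card_widen_dstar_Int_middle[OF L(1,5) _ J] tight_count(2)[OF L(2) tight] h(2)
    by (intro dvd_sum) simp
  finally show False using h by simp
qed

end

lemma card_SCAC3_bounds:
  assumes "is_SCAC L 3 C" "18 \<le> L" "even L"
  shows "8 * card C + 2 \<le> L + (if 3 dvd L then 4 else 2) + (if 4 dvd L then 2 else 0)"
    and "L mod 24 = 12 \<Longrightarrow> 8 * card C < L + 4"
proof -
  have "8 * card C + 2 \<le> L + (if 3 dvd L then 4 else 2) + (if 4 dvd L then 2 else 0)
      \<and> (L mod 24 = 12 \<longrightarrow> 8 * card C < L + 4)"
  proof (cases "2 \<le> card C")
    case True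
    then interpret scac3 L C using assms(1) by unfold_locales
    show ?thesis using eight_mult_card_le[OF assms(3)] sum_deficit_le eight_mult_card_less assms(2)
      by fastforce
  qed (use assms(2) in auto)
  then show "8 * card C + 2 \<le> L + (if 3 dvd L then 4 else 2) + (if 4 dvd L then 2 else 0)"
    and "L mod 24 = 12 \<Longrightarrow> 8 * card C < L + 4" by auto
qed

lemma bounds_from_count:
  fixes L M :: nat
  assumes "even L" "8 * M + 2 \<le> L + (if 3 dvd L then 4 else 2) + (if 4 dvd L then 2 else 0)"
    and "L mod 24 = 12 \<Longrightarrow> 8 * M < L + 4"
  shows "(L mod 8 = 0 \<longrightarrow> M \<le> L div 8)
       \<and> (L mod 8 = 4 \<longrightarrow> M \<le> (L - 4) div 8)
       \<and> (L mod 24 = 6 \<longrightarrow> M \<le> (L + 2) div 8)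
       \<and> (L mod 24 \<in> {2, 10, 18} \<longrightarrow> M \<le> (L - 2) div 8)
       \<and> (L mod 24 \<in> {14, 22} \<longrightarrow> M \<le> (L - 6) div 8)"
proof -
  define q r where "q = L div 24" and "r = L mod 24"
  have L: "L = 24 * q + r" and "r < 24" "even r"
    using assms(1) unfolding q_def r_def by presburger+
  have residues: "3 dvd L \<longleftrightarrow> 3 dvd r" "4 dvd L \<longleftrightarrow> 4 dvd r" "L mod 8 = r mod 8"
    unfolding L by presburger+
  have "r \<in> {0, 2, 4, 6, 8, 10, 12, 14, 16, 18, 20, 22}"
    using \<open>r < 24\<close> \<open>even r\<close> by (auto simp: set_eq_iff) presburger
  then show ?thesis
    using assms(2,3) unfolding residues r_def[symmetric] unfolding L
    by (elim insertE emptyE; simp; presburger)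
qed

theorem mainTheorem8:
  fixes L :: nat
  assumes "L \<ge> 18" and "even L"
  shows "(L mod 8 = 0 \<longrightarrow> M_S L 3 \<le> L div 8)
       \<and> (L mod 8 = 4 \<longrightarrow> M_S L 3 \<le> (L - 4) div 8)
       \<and> (L mod 24 = 6 \<longrightarrow> M_S L 3 \<le> (L + 2) div 8)
       \<and> (L mod 24 \<in> {2, 10, 18} \<longrightarrow> M_S L 3 \<le> (L - 2) div 8)
       \<and> (L mod 24 \<in> {14, 22} \<longrightarrow> M_S L 3 \<le> (L - 6) div 8)"
proof -
  obtain C where C: "is_SCAC L 3 C" "M_S L 3 = card C"
    using obtain_M_S_witness .
  show ?thesis
    unfolding C(2) using assms(2) card_SCAC3_bounds[OF C(1) assms] by (rule bounds_from_count)
qed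

end
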